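(* Let $\mathcal{D}$ be a distribution on $\mathbb{R}^d$ with finite second moments, $f:\mathbb{R}^d\to\{0,1\}$ with $\Pr_{\mathcal{D}}[f=a]>0$ for $a\in\{0,1\}$, $q\ge2$, $1\le k\le q-1$, and for $a\in\{0,1\}$ let $\mathbf{X}_a$ denote $\mathbf{X}\sim\mathcal{D}$ conditioned on $f(\mathbf{X})=a$. Then the bag and pair covariance matrices of $\mathrm{Ex}(f,\mathcal{D},q,k)$ satisfy $$\boldsymbol{\Sigma}_D=2\boldsymbol{\Sigma}_B+\frac{2}{q-1}\frac kq\Big(1-\frac kq\Big)(\mathbb{E}[\mathbf{X}_1]-\mathbb{E}[\mathbf{X}_0])(\mathbb{E}[\mathbf{X}_1]-\mathbb{E}[\mathbf{X}_0])^{\mathsf T}.$$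
   Context: The bag oracle $\mathrm{Ex}(f,\mathcal{D},q,k)$ returns a bag of $q$ independent points, $k$ drawn from $\mathcal{D}$ conditioned on $f=1$ and $q-k$ from $\mathcal{D}$ conditioned on $f=0$. $\boldsymbol{\Sigma}_B:=\mathrm{Var}[\mathbf{X}]$ where $\mathbf{X}$ is a uniformly random point of a random bag; $\boldsymbol{\Sigma}_D:=\mathbb{E}[\mathbf{Z}\mathbf{Z}^{\mathsf T}]$ where $\mathbf{Z}=\mathbf{X}'_1-\mathbf{X}'_2$ for a uniformly random pair drawn without replacement from a random bag. *)

theory Defs
  imports "HOL-Probability.Probability"
begin

definition cond_dist :: "(real^'d) measure \<Rightarrow> (real^'d \<Rightarrow> nat) \<Rightarrow> nat \<Rightarrow> (real^'d) measure"
  where "cond_dist D f a = uniform_measure D {x \<in> space D. f x = a}"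

definition cond_mean :: "(real^'d) measure \<Rightarrow> (real^'d \<Rightarrow> nat) \<Rightarrow> nat \<Rightarrow> real^'d"
  where "cond_mean D f a = (\<chi> i. \<integral>x. x $ i \<partial>(cond_dist D f a))"

definition bag_oracle :: "(real^'d) measure \<Rightarrow> (real^'d \<Rightarrow> nat) \<Rightarrow> nat \<Rightarrow> nat \<Rightarrow> (nat \<Rightarrow> real^'d) measure"
  where "bag_oracle D f q k =
     (\<Pi>\<^sub>M i\<in>{..<q}. (if i < k then cond_dist D f 1 else cond_dist D f 0))"

definition bag_point_space :: "(real^'d) measure \<Rightarrow> (real^'d \<Rightarrow> nat) \<Rightarrow> nat \<Rightarrow> nat \<Rightarrow> ((nat \<Rightarrow> real^'d) \<times> nat) measure"
  where "bag_point_space D f q k = bag_oracle D f q k \<Otimes>\<^sub>M uniform_count_measure {..<q}"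

definition bag_pair_space :: "(real^'d) measure \<Rightarrow> (real^'d \<Rightarrow> nat) \<Rightarrow> nat \<Rightarrow> nat \<Rightarrow> ((nat \<Rightarrow> real^'d) \<times> (nat \<times> nat)) measure"
  where "bag_pair_space D f q k = bag_oracle D f q k \<Otimes>\<^sub>M
           uniform_count_measure {(s, t). s < q \<and> t < q \<and> s \<noteq> t}"

definition Sigma_B :: "(real^'d) measure \<Rightarrow> (real^'d \<Rightarrow> nat) \<Rightarrow> nat \<Rightarrow> nat \<Rightarrow> real^'d^'d"
  where "Sigma_B D f q k =
    (let M = bag_point_space D f q k;
         X = (\<lambda>(b, t). b t);
         m = (\<chi> i. \<integral>\<omega>. X \<omega> $ i \<partial>M)
     in (\<chi> i j. \<integral>\<omega>. (X \<omega> $ i - m $ i) * (X \<omega> $ j - m $ j) \<partial>M))"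

definition Sigma_D :: "(real^'d) measure \<Rightarrow> (real^'d \<Rightarrow> nat) \<Rightarrow> nat \<Rightarrow> nat \<Rightarrow> real^'d^'d"
  where "Sigma_D D f q k =
    (let M = bag_pair_space D f q k;
         Z = (\<lambda>(b, (s, t)). b s - b t)
     in (\<chi> i j. \<integral>\<omega>. Z \<omega> $ i * Z \<omega> $ j \<partial>M))"

definition outer :: "real^'d \<Rightarrow> real^'d \<Rightarrow> real^'d^'d"
  where "outer u v = (\<chi> i j. u $ i * v $ j)"

end

theory Submission
  imports Defs
begin

text \<open>
  Let \<open>\<mu>\<^sub>t\<close> and \<open>S\<^sub>t\<close> be the mean and the second-moment matrix of the \<open>t\<close>-th point of the bag.
  A uniformly random point of the bag is a mixture, so
  \<open>\<Sigma>\<^sub>B = avg\<^sub>t S\<^sub>t - \<mu>\<mu>\<^sup>T\<close> with \<open>\<mu> = avg\<^sub>t \<mu>\<^sub>t\<close>. For \<open>s \<noteq> t\<close> the points are independent, so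
  \<open>E[(X\<^sub>s - X\<^sub>t)(X\<^sub>s - X\<^sub>t)\<^sup>T] = S\<^sub>s + S\<^sub>t - \<mu>\<^sub>s\<mu>\<^sub>t\<^sup>T - \<mu>\<^sub>t\<mu>\<^sub>s\<^sup>T\<close>, and averaging over
  ordered pairs gives \<open>\<Sigma>\<^sub>D = 2\<Sigma>\<^sub>B + 2/(q-1) Cov(\<mu>\<^sub>T)\<close> for a uniform index \<open>T\<close>, whatever the
  laws of the points are. In the bag oracle \<open>\<mu>\<^sub>T\<close> is \<open>E[X\<^sub>1]\<close> with probability \<open>k/q\<close> and
  \<open>E[X\<^sub>0]\<close> otherwise, so \<open>Cov(\<mu>\<^sub>T) = (k/q)(1 - k/q)(E[X\<^sub>1] - E[X\<^sub>0])(E[X\<^sub>1] - E[X\<^sub>0])\<^sup>T\<close>.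
\<close>

lemma integrable_mult_of_square_integrable:
  fixes f g :: "'a \<Rightarrow> real"
  assumes [measurable]: "f \<in> borel_measurable M" "g \<in> borel_measurable M"
    and "integrable M (\<lambda>x. (f x)\<^sup>2)" "integrable M (\<lambda>x. (g x)\<^sup>2)"
  shows "integrable M (\<lambda>x. f x * g x)"
proof (rule Bochner_Integration.integrable_bound)
  show "integrable M (\<lambda>x. (f x)\<^sup>2 + (g x)\<^sup>2)"
    using assms(3,4) by (rule Bochner_Integration.integrable_add)
  have "\<bar>f x * g x\<bar> \<le> (f x)\<^sup>2 + (g x)\<^sup>2" for x
  proof -
    have "2 * \<bar>f x * g x\<bar> \<le> (f x)\<^sup>2 + (g x)\<^sup>2"
      using sum_squares_bound[of "\<bar>f x\<bar>" "\<bar>g x\<bar>"] by (simp add: abs_mult mult.assoc)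
    then show ?thesis
      using abs_ge_zero[of "f x * g x"] by linarith
  qed
  then show "AE x in M. norm (f x * g x) \<le> norm ((f x)\<^sup>2 + (g x)\<^sup>2)"
    by (intro AE_I2) simp
qed simp

lemma integrable_uniform_measure:
  fixes h :: "'a \<Rightarrow> real"
  assumes "integrable M h" and [measurable]: "A \<in> sets M"
    and "emeasure M A \<noteq> 0" "emeasure M A \<noteq> \<infinity>"
  shows "integrable (uniform_measure M A) h"
proof -
  have "0 < measure M A"
    using assms(3,4) by (simp add: emeasure_eq_ennreal_measure zero_less_measure_iff)
  have "uniform_measure M A = density M (\<lambda>x. ennreal (indicator A x / measure M A))"
    unfolding uniform_measure_def
  proof (rule density_cong)
    show "AE x in M. indicator A x / emeasure M A = ennreal (indicator A x / measure M A)"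
      using assms(4) divide_ennreal[OF zero_le_one \<open>0 < measure M A\<close>]
      by (intro AE_I2) (simp add: emeasure_eq_ennreal_measure indicator_def)
  qed simp_all
  moreover have "integrable M (\<lambda>x. indicator A x / measure M A * h x)"
    using assms(1) by (simp add: integrable_real_mult_indicator mult.commute)
  ultimately show ?thesis
    using borel_measurable_integrable[OF assms(1)] by (simp add: integrable_density)
qed

lemma integral_pair_uniform_count_measure:
  fixes G :: "'a \<Rightarrow> 'b \<Rightarrow> real"
  assumes "sigma_finite_measure M" "finite A" "A \<noteq> {}"
    and integrable: "\<And>t. t \<in> A \<Longrightarrow> integrable M (\<lambda>x. G x t)"
  shows "(\<integral>\<omega>. G (fst \<omega>) (snd \<omega>) \<partial>(M \<Otimes>\<^sub>M uniform_count_measure A)) = (\<Sum>t\<in>A. \<integral>x. G x t \<partial>M) / card A"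
proof -
  interpret U: prob_space "uniform_count_measure A"
    using assms(2,3) by (rule prob_space_uniform_count_measure)
  interpret pair_sigma_finite M "uniform_count_measure A"
    using assms(1) by (simp add: pair_sigma_finite_def U.sigma_finite_measure_axioms)
  have "(\<lambda>\<omega>. G (fst \<omega>) (snd \<omega>)) \<in> borel_measurable (M \<Otimes>\<^sub>M uniform_count_measure A)"
  proof (rule measurable_compose_countable'[where I=A])
    show "(\<lambda>\<omega>. G (fst \<omega>) t) \<in> borel_measurable (M \<Otimes>\<^sub>M uniform_count_measure A)" if "t \<in> A" for t
      using borel_measurable_integrable[OF integrable[OF that]] by measurable
    show "snd \<in> measurable (M \<Otimes>\<^sub>M uniform_count_measure A) (count_space A)"
      using measurable_snd[of M "uniform_count_measure A"]
      by (simp add: measurable_cong_sets sets_uniform_count_measure_count_space)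
  qed (use assms(2) in \<open>simp add: countable_finite\<close>)
  then have "integrable (M \<Otimes>\<^sub>M uniform_count_measure A) (\<lambda>\<omega>. G (fst \<omega>) (snd \<omega>))"
  proof (rule Fubini_integrable)
    show "integrable M (\<lambda>x. \<integral>t. norm (G (fst (x, t)) (snd (x, t))) \<partial>uniform_count_measure A)"
      using assms(2) integrable by (simp add: integral_uniform_count_measure)
    show "AE x in M. integrable (uniform_count_measure A) (\<lambda>t. G (fst (x, t)) (snd (x, t)))"
      using assms(2) by (simp add: uniform_count_measure_def integrable_point_measure_finite)
  qed
  then have "(\<integral>t. (\<integral>x. G x t \<partial>M) \<partial>uniform_count_measure A) =
      (\<integral>\<omega>. G (fst \<omega>) (snd \<omega>) \<partial>(M \<Otimes>\<^sub>M uniform_count_measure A))"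
    by (subst integral_snd) (simp_all add: case_prod_beta')
  then show ?thesis
    using assms(2) by (simp add: integral_uniform_count_measure)
qed

lemma (in product_prob_space) integral_PiM_prod_subset:
  fixes g :: "'i \<Rightarrow> 'a \<Rightarrow> real"
  assumes "finite I" "J \<subseteq> I" "\<And>u. u \<in> J \<Longrightarrow> integrable (M u) (g u)"
  shows "integrable (PiM I M) (\<lambda>\<omega>. \<Prod>u\<in>J. g u (\<omega> u))"
    and "(\<integral>\<omega>. (\<Prod>u\<in>J. g u (\<omega> u)) \<partial>PiM I M) = (\<Prod>u\<in>J. integral\<^sup>L (M u) (g u))"
proof -
  define F where "F u = (if u \<in> J then g u else (\<lambda>_. 1))" for u
  have F: "integrable (M u) (F u)" if "u \<in> I" for u
    using assms(3) by (simp add: F_def)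
  have restrict: "(\<Prod>u\<in>I. if u \<in> J then h u else 1) = (\<Prod>u\<in>J. h u)" for h :: "'i \<Rightarrow> real"
    using assms(1,2) by (simp add: prod.inter_restrict[symmetric] Int_absorb1)
  have "F u x = (if u \<in> J then g u x else 1)" for u x
    by (simp add: F_def)
  then have "(\<Prod>u\<in>I. F u (\<omega> u)) = (\<Prod>u\<in>J. g u (\<omega> u))" for \<omega>
    using restrict[of "\<lambda>u. g u (\<omega> u)"] by simp
  moreover have "integral\<^sup>L (M u) (F u) = (if u \<in> J then integral\<^sup>L (M u) (g u) else 1)" for u
    by (simp add: F_def M.prob_space)
  then have "(\<Prod>u\<in>I. integral\<^sup>L (M u) (F u)) = (\<Prod>u\<in>J. integral\<^sup>L (M u) (g u))"
    using restrict[of "\<lambda>u. integral\<^sup>L (M u) (g u)"] by simp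
  ultimately show "integrable (PiM I M) (\<lambda>\<omega>. \<Prod>u\<in>J. g u (\<omega> u))"
    and "(\<integral>\<omega>. (\<Prod>u\<in>J. g u (\<omega> u)) \<partial>PiM I M) = (\<Prod>u\<in>J. integral\<^sup>L (M u) (g u))"
    using product_integrable_prod[OF assms(1) F] product_integral_prod[OF assms(1) F] by simp_all
qed

lemma (in product_prob_space) integral_PiM_component:
  fixes g :: "'a \<Rightarrow> real"
  assumes "finite I" "i \<in> I" "integrable (M i) g"
  shows "integrable (PiM I M) (\<lambda>\<omega>. g (\<omega> i))"
    and "(\<integral>\<omega>. g (\<omega> i) \<partial>PiM I M) = integral\<^sup>L (M i) g"
  using integral_PiM_prod_subset[of "{i}" "\<lambda>_. g"] assms by simp_all

lemma (in product_prob_space) integral_PiM_two_components: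
  fixes g h :: "'a \<Rightarrow> real"
  assumes "finite I" "i \<in> I" "j \<in> I" "i \<noteq> j" "integrable (M i) g" "integrable (M j) h"
  shows "integrable (PiM I M) (\<lambda>\<omega>. g (\<omega> i) * h (\<omega> j))"
    and "(\<integral>\<omega>. g (\<omega> i) * h (\<omega> j) \<partial>PiM I M) = integral\<^sup>L (M i) g * integral\<^sup>L (M j) h"
proof -
  have "integrable (M u) (if u = i then g else h)" if "u \<in> {i, j}" for u
    using assms(5,6) that by auto
  then show "integrable (PiM I M) (\<lambda>\<omega>. g (\<omega> i) * h (\<omega> j))"
    and "(\<integral>\<omega>. g (\<omega> i) * h (\<omega> j) \<partial>PiM I M) = integral\<^sup>L (M i) g * integral\<^sup>L (M j) h"
    using integral_PiM_prod_subset[of "{i, j}" "\<lambda>u. if u = i then g else h"] assms(1-4) by simp_all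
qed

lemma sum_off_diagonal_pairs:
  fixes S a b :: "'a \<Rightarrow> real"
  assumes "finite A"
  shows "(\<Sum>s\<in>A. \<Sum>t\<in>A - {s}. S s + S t - a s * b t - a t * b s)
    = 2 * (real (card A) - 1) * sum S A - 2 * (sum a A * sum b A - (\<Sum>t\<in>A. a t * b t))"
proof -
  have "(\<Sum>t\<in>A - {s}. S s + S t - a s * b t - a t * b s)
      = real (card A) * S s + sum S A - a s * sum b A - sum a A * b s - 2 * S s + 2 * (a s * b s)"
    if "s \<in> A" for s
  proof -
    have "(\<Sum>t\<in>A - {s}. S s + S t - a s * b t - a t * b s)
        = (\<Sum>t\<in>A. S s + S t - a s * b t - a t * b s) - (2 * S s - 2 * (a s * b s))"
      using assms that by (simp add: sum_diff1)
    then show ?thesis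
      by (simp add: sum.distrib sum_subtractf sum_distrib_left sum_distrib_right)
  qed
  then have "(\<Sum>s\<in>A. \<Sum>t\<in>A - {s}. S s + S t - a s * b t - a t * b s)
      = (\<Sum>s\<in>A. real (card A) * S s + sum S A - a s * sum b A - sum a A * b s - 2 * S s + 2 * (a s * b s))"
    by (rule sum.cong[OF refl])
  also have "\<dots> = 2 * (real (card A) - 1) * sum S A - 2 * (sum a A * sum b A - (\<Sum>t\<in>A. a t * b t))"
    by (simp add: sum.distrib sum_subtractf sum_distrib_left[symmetric] sum_distrib_right[symmetric] algebra_simps)
       (simp add: sum_distrib_left mult_ac)
  finally show ?thesis .
qed

lemma sum_lessThan_two_valued:
  fixes x y :: real
  assumes "k \<le> q"
  shows "(\<Sum>t<q. if t < k then x else y) = real k * x + (real q - real k) * y"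
proof -
  have "{..<q} \<inter> {t. t < k} = {..<k}" "{..<q} \<inter> - {t. t < k} = {k..<q}"
    using assms by auto
  then show ?thesis
    using assms by (simp add: sum.If_cases)
qed

lemma covariance_two_valued:
  fixes a\<^sub>0 a\<^sub>1 b\<^sub>0 b\<^sub>1 :: real
  assumes "k \<le> q" "0 < q"
  defines "a t \<equiv> if t < k then a\<^sub>1 else a\<^sub>0" and "b t \<equiv> if t < k then b\<^sub>1 else b\<^sub>0"
  shows "(\<Sum>t<q. a t * b t) / q - (\<Sum>t<q. a t) / q * ((\<Sum>t<q. b t) / q)
    = real k / real q * (1 - real k / real q) * ((a\<^sub>1 - a\<^sub>0) * (b\<^sub>1 - b\<^sub>0))"
proof -
  have "a t * b t = (if t < k then a\<^sub>1 * b\<^sub>1 else a\<^sub>0 * b\<^sub>0)" for t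
    by (simp add: a_def b_def)
  then show ?thesis
    using assms(2) by (simp add: a_def b_def sum_lessThan_two_valued[OF assms(1)] field_simps)
qed

locale square_integrable_bag = product_prob_space M "{..<q}"
  for M :: "nat \<Rightarrow> (real^'d) measure" and q :: nat +
  assumes sets_M: "\<And>t. sets (M t) = sets borel"
    and square_integrable: "\<And>t i. integrable (M t) (\<lambda>x. (x $ i)\<^sup>2)"
begin

definition mean :: "nat \<Rightarrow> real^'d"
  where "mean t = (\<chi> i. \<integral>x. x $ i \<partial>M t)"

definition second_moment :: "nat \<Rightarrow> 'd \<Rightarrow> 'd \<Rightarrow> real"
  where "second_moment t i j = (\<integral>x. x $ i * x $ j \<partial>M t)"

lemma measurable_coordinate [measurable]: "(\<lambda>x. x $ i) \<in> borel_measurable (M t)"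
  by (simp add: measurable_cong_sets[OF sets_M refl])

lemma integrable_coordinate: "integrable (M t) (\<lambda>x. x $ i)"
  by (rule M.square_integrable_imp_integrable) (simp_all add: square_integrable)

lemma integrable_coordinate_mult: "integrable (M t) (\<lambda>x. x $ i * x $ j)"
  by (rule integrable_mult_of_square_integrable) (simp_all add: square_integrable)

lemma integral_centered_product:
  "integrable (M t) (\<lambda>x. (x $ i - c) * (x $ j - d))"
  "(\<integral>x. (x $ i - c) * (x $ j - d) \<partial>M t) = second_moment t i j - d * mean t $ i - c * mean t $ j + c * d"
proof -
  have "(\<lambda>x. (x $ i - c) * (x $ j - d)) = (\<lambda>x. x $ i * x $ j - d * x $ i - c * x $ j + c * d)"
    by (simp add: fun_eq_iff algebra_simps)
  then show "integrable (M t) (\<lambda>x. (x $ i - c) * (x $ j - d))"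
    and "(\<integral>x. (x $ i - c) * (x $ j - d) \<partial>M t) = second_moment t i j - d * mean t $ i - c * mean t $ j + c * d"
    using integrable_coordinate[of t i] integrable_coordinate[of t j] integrable_coordinate_mult[of t i j]
    by (simp_all add: mean_def second_moment_def M.prob_space)
qed

lemma integral_bag_point:
  fixes g :: "real^'d \<Rightarrow> real"
  assumes "0 < q" "\<And>t. integrable (M t) g"
  shows "(\<integral>\<omega>. g (fst \<omega> (snd \<omega>)) \<partial>(PiM {..<q} M \<Otimes>\<^sub>M uniform_count_measure {..<q}))
    = (\<Sum>t<q. integral\<^sup>L (M t) g) / q"
  using assms integral_PiM_component[OF finite_lessThan _ assms(2)]
  by (subst integral_pair_uniform_count_measure[where G="\<lambda>b t. g (b t)"])
     (simp_all add: P.sigma_finite_measure_axioms lessThan_empty_iff)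

lemma Sigma_B_entry:
  assumes "bag_oracle D f q k = PiM {..<q} M" "0 < q"
  shows "Sigma_B D f q k $ i $ j
    = (\<Sum>t<q. second_moment t i j) / q - (\<Sum>t<q. mean t $ i) / q * ((\<Sum>t<q. mean t $ j) / q)"
proof -
  let ?B = "PiM {..<q} M \<Otimes>\<^sub>M uniform_count_measure {..<q}"
  define c where "c l = (\<Sum>t<q. mean t $ l) / q" for l
  have "(\<integral>\<omega>. fst \<omega> (snd \<omega>) $ l \<partial>?B) = c l" for l
    using integral_bag_point[OF assms(2) integrable_coordinate] by (simp add: c_def mean_def)
  then have "Sigma_B D f q k $ i $ j = (\<integral>\<omega>. (fst \<omega> (snd \<omega>) $ i - c i) * (fst \<omega> (snd \<omega>) $ j - c j) \<partial>?B)"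
    by (simp add: Sigma_B_def bag_point_space_def assms(1) case_prod_beta)
  also have "\<dots> = (\<Sum>t<q. second_moment t i j - c j * mean t $ i - c i * mean t $ j + c i * c j) / q"
    using integral_bag_point[where g="\<lambda>x. (x $ i - c i) * (x $ j - c j)", OF assms(2)]
    by (simp add: integral_centered_product)
  also have "\<dots> = (\<Sum>t<q. second_moment t i j) / q - c i * c j"
  proof -
    have "(\<Sum>t<q. mean t $ l) = q * c l" for l
      using assms(2) by (simp add: c_def)
    then show ?thesis
      using assms(2) by (simp add: sum.distrib sum_subtractf sum_distrib_left[symmetric] field_simps)
  qed
  finally show ?thesis
    by (simp add: c_def)
qed

lemma integral_difference_product:
  assumes "s < q" "t < q" "s \<noteq> t"
  shows "integrable (PiM {..<q} M) (\<lambda>b. (b s $ i - b t $ i) * (b s $ j - b t $ j))"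
    and "(\<integral>b. (b s $ i - b t $ i) * (b s $ j - b t $ j) \<partial>PiM {..<q} M)
      = second_moment s i j + second_moment t i j - mean s $ i * mean t $ j - mean t $ i * mean s $ j"
proof -
  have expand: "(\<lambda>b :: nat \<Rightarrow> real^'d. (b s $ i - b t $ i) * (b s $ j - b t $ j)) =
      (\<lambda>b. b s $ i * b s $ j - b s $ i * b t $ j - b t $ i * b s $ j + b t $ i * b t $ j)"
    by (simp add: fun_eq_iff algebra_simps)
  note diagonal = integral_PiM_component[OF finite_lessThan _ integrable_coordinate_mult]
  note off_diagonal = integral_PiM_two_components[OF finite_lessThan _ _ _ integrable_coordinate integrable_coordinate]
  show "integrable (PiM {..<q} M) (\<lambda>b. (b s $ i - b t $ i) * (b s $ j - b t $ j))"
    and "(\<integral>b. (b s $ i - b t $ i) * (b s $ j - b t $ j) \<partial>PiM {..<q} M)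
      = second_moment s i j + second_moment t i j - mean s $ i * mean t $ j - mean t $ i * mean s $ j"
    unfolding expand using assms diagonal off_diagonal off_diagonal[OF _ _ not_sym]
    by (simp_all add: mean_def second_moment_def)
qed

lemma Sigma_D_entry:
  assumes "bag_oracle D f q k = PiM {..<q} M" "2 \<le> q"
  shows "Sigma_D D f q k $ i $ j
    = (2 * (real q - 1) * (\<Sum>t<q. second_moment t i j)
        - 2 * ((\<Sum>t<q. mean t $ i) * (\<Sum>t<q. mean t $ j) - (\<Sum>t<q. mean t $ i * mean t $ j)))
      / (real q * (real q - 1))"
proof -
  let ?G = "\<lambda>b p. (b (fst p) $ i - b (snd p) $ i) * (b (fst p) $ j - b (snd p) $ j)"
  have pairs: "{(s, t). s < q \<and> t < q \<and> s \<noteq> t} = (SIGMA s:{..<q}. {..<q} - {s})"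
    by auto
  have "card (SIGMA s:{..<q}. {..<q} - {s}) = q * (q - 1)"
    by simp
  then have card_pairs: "real (card (SIGMA s:{..<q}. {..<q} - {s})) = real q * (real q - 1)"
    using assms(2) by simp
  have "(0, 1) \<in> (SIGMA s:{..<q}. {..<q} - {s})"
    using assms(2) by auto
  moreover have "integrable (PiM {..<q} M) (\<lambda>b. ?G b p)" if "p \<in> (SIGMA s:{..<q}. {..<q} - {s})" for p
    using that by (cases p) (auto intro!: integral_difference_product(1))
  ultimately have "Sigma_D D f q k $ i $ j
      = (\<Sum>p\<in>(SIGMA s:{..<q}. {..<q} - {s}). \<integral>b. ?G b p \<partial>PiM {..<q} M) / (real q * (real q - 1))"
    unfolding Sigma_D_def bag_pair_space_def assms(1) pairs card_pairs[symmetric]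
    by (subst integral_pair_uniform_count_measure[symmetric])
       (auto simp: P.sigma_finite_measure_axioms case_prod_beta)
  also have "(\<Sum>p\<in>(SIGMA s:{..<q}. {..<q} - {s}). \<integral>b. ?G b p \<partial>PiM {..<q} M)
      = (\<Sum>s<q. \<Sum>t\<in>{..<q} - {s}. \<integral>b. ?G b (s, t) \<partial>PiM {..<q} M)"
    by (simp add: sum.Sigma split_def)
  also have "\<dots> = (\<Sum>s<q. \<Sum>t\<in>{..<q} - {s}. second_moment s i j + second_moment t i j
        - mean s $ i * mean t $ j - mean t $ i * mean s $ j)"
    by (intro sum.cong refl) (simp add: integral_difference_product(2))
  finally show ?thesis
    by (simp add: sum_off_diagonal_pairs)
qed

lemma Sigma_D_entry_eq_Sigma_B_entry:
  assumes "bag_oracle D f q k = PiM {..<q} M" "2 \<le> q"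
  shows "Sigma_D D f q k $ i $ j = 2 * Sigma_B D f q k $ i $ j
    + 2 / (real q - 1) * ((\<Sum>t<q. mean t $ i * mean t $ j) / q
        - (\<Sum>t<q. mean t $ i) / q * ((\<Sum>t<q. mean t $ j) / q))"
  using assms by (simp add: Sigma_D_entry Sigma_B_entry field_simps)

end

lemma
  fixes D :: "(real^'d) measure"
  assumes "prob_space D" "{x \<in> space D. f x = a} \<in> sets D" "measure D {x \<in> space D. f x = a} > 0"
  shows prob_space_cond_dist: "prob_space (cond_dist D f a)"
    and integrable_cond_dist: "integrable D h \<Longrightarrow> integrable (cond_dist D f a) (h :: _ \<Rightarrow> real)"
proof -
  interpret prob_space D
    by fact
  have "emeasure D {x \<in> space D. f x = a} \<noteq> 0" "emeasure D {x \<in> space D. f x = a} \<noteq> \<infinity>"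
    using assms(3) by (simp_all add: emeasure_eq_measure)
  then show "prob_space (cond_dist D f a)" and "integrable D h \<Longrightarrow> integrable (cond_dist D f a) h"
    unfolding cond_dist_def using assms(2)
    by (simp_all add: prob_space_uniform_measure integrable_uniform_measure)
qed

lemma square_integrable_bag_cond_dist:
  fixes D :: "(real^'d) measure"
  assumes "prob_space D" "sets D = sets borel" "\<And>i. integrable D (\<lambda>x. (x $ i)\<^sup>2)"
    and "\<And>a. {x \<in> space D. f x = a} \<in> sets D"
    and "\<And>a. a \<in> {0, 1} \<Longrightarrow> measure D {x \<in> space D. f x = a} > 0"
  shows "square_integrable_bag (\<lambda>t. if t < k then cond_dist D f 1 else cond_dist D f 0)"
proof (intro square_integrable_bag.intro square_integrable_bag_axioms.intro)
  show "product_prob_space (\<lambda>t. if t < k then cond_dist D f 1 else cond_dist D f 0)"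
    using assms(1,4,5)
    by (simp add: product_prob_space_def product_prob_space_axioms_def product_sigma_finite_def
        prob_space_cond_dist prob_space_imp_sigma_finite)
  show "sets (if t < k then cond_dist D f 1 else cond_dist D f 0) = sets borel" for t
    using assms(2) by (simp add: cond_dist_def)
  show "integrable (if t < k then cond_dist D f 1 else cond_dist D f 0) (\<lambda>x. (x $ i)\<^sup>2)" for t i
    using assms(1,3,4,5) by (simp add: integrable_cond_dist)
qed

theorem lemma9:
  fixes D :: "(real^'d) measure" and f :: "real^'d \<Rightarrow> nat" and q k :: nat
  assumes "prob_space D" and "sets D = sets borel"
    and "\<And>i. integrable D (\<lambda>x. (x $ i)\<^sup>2)"
    and "\<And>x. f x \<in> {0, 1}"
    and "\<And>a. {x \<in> space D. f x = a} \<in> sets D"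
    and "\<And>a. a \<in> {0, 1} \<Longrightarrow> measure D {x \<in> space D. f x = a} > 0"
    and "q \<ge> 2" and "1 \<le> k" and "k \<le> q - 1"
  shows "Sigma_D D f q k =
    2 *\<^sub>R Sigma_B D f q k
    + ((2 / (real q - 1)) * (real k / real q) * (1 - real k / real q)) *\<^sub>R
        outer (cond_mean D f 1 - cond_mean D f 0) (cond_mean D f 1 - cond_mean D f 0)"
proof -
  define M where "M t = (if t < k then cond_dist D f 1 else cond_dist D f 0)" for t
  interpret square_integrable_bag M q
    unfolding M_def[abs_def] using assms(1-3,5,6) by (rule square_integrable_bag_cond_dist)
  have bag: "bag_oracle D f q k = PiM {..<q} M"
    by (simp add: bag_oracle_def M_def[abs_def])
  have mean: "mean t $ i = (if t < k then cond_mean D f 1 $ i else cond_mean D f 0 $ i)" for t i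
    by (simp add: mean_def M_def cond_mean_def)
  have "Sigma_D D f q k $ i $ j = (2 *\<^sub>R Sigma_B D f q k
      + ((2 / (real q - 1)) * (real k / real q) * (1 - real k / real q)) *\<^sub>R
        outer (cond_mean D f 1 - cond_mean D f 0) (cond_mean D f 1 - cond_mean D f 0)) $ i $ j" for i j
    using Sigma_D_entry_eq_Sigma_B_entry[OF bag assms(7), of i j]
      covariance_two_valued[of k q "cond_mean D f 1 $ i" "cond_mean D f 0 $ i" "cond_mean D f 1 $ j" "cond_mean D f 0 $ j"]
      assms(7,9)
    by (simp only: mean) (simp add: outer_def)
  then show ?thesis
    by (simp add: vec_eq_iff)
qed

end
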